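(* Let $U,V$ be bialgebras and $\langle\,,\rangle:U\otimes V\to k$ a pairing which is convolution invertible when regarded as an element $\rho$ of ${\rm Hom}(U^{\rm cop}\otimes V,k)$; let $\rho^{-1}$ be its convolution inverse there. Let $D=D(U^{\rm cop},V)$, $i:U^{\rm cop}\to D$, $i(m)=m\otimes 1$, and $j:V\to D$, $j(x)=1\otimes x$. (i) There exists a bialgebra map $\pi:D\to U^{\rm cop}$ with $\pi\circ i={\rm Id}$ if and only if there exists a bialgebra map $\gamma:V\to U^{\rm cop}$ such that for all $y\in V$, $m\in U$, $$\gamma(y)m=\rho^{-1}(m_1,y_3)\rho(m_3,y_1)\,m_2\gamma(y_2).$$ (ii) There exists a bialgebra map $D\to V$ which is a left inverse of $j$ if and only if there is a bialgebra map $\mu:U^{\rm cop}\to V$ such that for all $y\in V$, $m\in U$, $y\mu(m)=\rho^{-1}(m_1,y_3)\rho(m_3,y_1)\mu(m_2)y_2$. If $U,V$ are Hopf algebras, these maps are Hopf algebra morphisms. (In (i), $\pi(m\otimes x)=m\gamma(x)$ and $\gamma=\pi\circ j$.)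
   Context: Sweedler notation is used, subscripts always referring to comultiplication in $U$ or $V$ (not in $U^{\rm cop}$). A pairing satisfies $\langle mn,x\rangle=\langle m,x_1\rangle\langle n,x_2\rangle$, $\langle m,xy\rangle=\langle m_1,x\rangle\langle m_2,y\rangle$, $\langle 1,x\rangle=\varepsilon(x)$, $\langle m,1\rangle=\varepsilon(m)$. $D(U^{\rm cop},V)$ is the bialgebra with underlying space $U\otimes V$, unit $1\otimes 1$, counit $\varepsilon\otimes\varepsilon$, comultiplication $\Delta(m\otimes x)=(m_2\otimes x_1)\otimes(m_1\otimes x_2)$ and multiplication $(m\otimes x)(n\otimes y)=\rho(n_3,x_1)\rho^{-1}(n_1,x_3)\,mn_2\otimes x_2y$. Here $U^{\rm cop}$ is $U$ with the opposite comultiplication. *)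

theory Defs
  imports Main "HOL.Vector_Spaces"
begin

text \<open>Finite tensors are represented as lists of elementary tensors.
  Over a field, bilinear (resp. trilinear) forms separate the points of
  U \<otimes> V (resp. U \<otimes> V \<otimes> W), so two such lists
  represent the same tensor iff every bilinear (trilinear) form agrees on them.\<close>

definition bilin_form :: "('k::field \<Rightarrow> 'a::ab_group_add \<Rightarrow> 'a) \<Rightarrow> ('k \<Rightarrow> 'b::ab_group_add \<Rightarrow> 'b)
    \<Rightarrow> ('a \<Rightarrow> 'b \<Rightarrow> 'k) \<Rightarrow> bool" where
  "bilin_form sa sb f \<longleftrightarrow>
     (\<forall>c x x' y. f (sa c x + x') y = c * f x y + f x' y) \<and>
     (\<forall>c x y y'. f x (sb c y + y') = c * f x y + f x y')"

definition trilin_form :: "('k::field \<Rightarrow> 'a::ab_group_add \<Rightarrow> 'a) \<Rightarrow> ('k \<Rightarrow> 'b::ab_group_add \<Rightarrow> 'b)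
    \<Rightarrow> ('k \<Rightarrow> 'c::ab_group_add \<Rightarrow> 'c) \<Rightarrow> ('a \<Rightarrow> 'b \<Rightarrow> 'c \<Rightarrow> 'k) \<Rightarrow> bool" where
  "trilin_form sa sb sc f \<longleftrightarrow>
     (\<forall>c x x' y z. f (sa c x + x') y z = c * f x y z + f x' y z) \<and>
     (\<forall>c x y y' z. f x (sb c y + y') z = c * f x y z + f x y' z) \<and>
     (\<forall>c x y z z'. f x y (sc c z + z') = c * f x y z + f x y z')"

definition bilin_map :: "('k::field \<Rightarrow> 'a::ab_group_add \<Rightarrow> 'a) \<Rightarrow> ('k \<Rightarrow> 'b::ab_group_add \<Rightarrow> 'b)
    \<Rightarrow> ('k \<Rightarrow> 'w::ab_group_add \<Rightarrow> 'w) \<Rightarrow> ('a \<Rightarrow> 'b \<Rightarrow> 'w) \<Rightarrow> bool" where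
  "bilin_map sa sb sw f \<longleftrightarrow>
     (\<forall>c x x' y. f (sa c x + x') y = sw c (f x y) + f x' y) \<and>
     (\<forall>c x y y'. f x (sb c y + y') = sw c (f x y) + f x y')"

definition teq2 :: "('k::field \<Rightarrow> 'a::ab_group_add \<Rightarrow> 'a) \<Rightarrow> ('k \<Rightarrow> 'b::ab_group_add \<Rightarrow> 'b)
    \<Rightarrow> ('a \<times> 'b) list \<Rightarrow> ('a \<times> 'b) list \<Rightarrow> bool" where
  "teq2 sa sb xs ys \<longleftrightarrow> (\<forall>f. bilin_form sa sb f \<longrightarrow>
      (\<Sum>(a,b)\<leftarrow>xs. f a b) = (\<Sum>(a,b)\<leftarrow>ys. f a b))"

definition teq3 :: "('k::field \<Rightarrow> 'a::ab_group_add \<Rightarrow> 'a) \<Rightarrow> ('k \<Rightarrow> 'b::ab_group_add \<Rightarrow> 'b)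
    \<Rightarrow> ('k \<Rightarrow> 'c::ab_group_add \<Rightarrow> 'c)
    \<Rightarrow> ('a \<times> 'b \<times> 'c) list \<Rightarrow> ('a \<times> 'b \<times> 'c) list \<Rightarrow> bool" where
  "teq3 sa sb sc xs ys \<longleftrightarrow> (\<forall>f. trilin_form sa sb sc f \<longrightarrow>
      (\<Sum>(a,b,c)\<leftarrow>xs. f a b c) = (\<Sum>(a,b,c)\<leftarrow>ys. f a b c))"

text \<open>Sweedler: \<open>comult2 \<Delta> m\<close> lists the terms (m1, m2, m3) of (\<Delta> \<otimes> id)\<Delta>(m).\<close>
definition comult2 :: "('a \<Rightarrow> ('a \<times> 'a) list) \<Rightarrow> 'a \<Rightarrow> ('a \<times> 'a \<times> 'a) list" where
  "comult2 \<Delta> m = concat (map (\<lambda>(a,b). map (\<lambda>(c,d). (c,d,b)) (\<Delta> a)) (\<Delta> m))"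

definition cop :: "('a \<Rightarrow> ('a \<times> 'a) list) \<Rightarrow> 'a \<Rightarrow> ('a \<times> 'a) list" where
  "cop \<Delta> m = map prod.swap (\<Delta> m)"

definition bialgebra :: "('k::field \<Rightarrow> 'a::ring_1 \<Rightarrow> 'a) \<Rightarrow> ('a \<Rightarrow> ('a \<times> 'a) list) \<Rightarrow> ('a \<Rightarrow> 'k) \<Rightarrow> bool" where
  "bialgebra sc \<Delta> \<epsilon> \<longleftrightarrow>
     vector_space sc \<and>
     (\<forall>c x y. sc c (x * y) = sc c x * y \<and> sc c (x * y) = x * sc c y) \<and>
     (\<forall>c x y. teq2 sc sc (\<Delta> (sc c x + y)) (map (\<lambda>(p,q). (sc c p, q)) (\<Delta> x) @ \<Delta> y)) \<and>
     (\<forall>c x y. \<epsilon> (sc c x + y) = c * \<epsilon> x + \<epsilon> y) \<and>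
     (\<forall>m. teq3 sc sc sc (comult2 \<Delta> m)
            (concat (map (\<lambda>(a,b). map (\<lambda>(c,d). (a,c,d)) (\<Delta> b)) (\<Delta> m)))) \<and>
     (\<forall>m. (\<Sum>(a,b)\<leftarrow>\<Delta> m. sc (\<epsilon> a) b) = m \<and> (\<Sum>(a,b)\<leftarrow>\<Delta> m. sc (\<epsilon> b) a) = m) \<and>
     (\<forall>x y. teq2 sc sc (\<Delta> (x * y))
            (concat (map (\<lambda>(a,b). map (\<lambda>(c,d). (a * c, b * d)) (\<Delta> y)) (\<Delta> x)))) \<and>
     teq2 sc sc (\<Delta> 1) [(1,1)] \<and>
     (\<forall>x y. \<epsilon> (x * y) = \<epsilon> x * \<epsilon> y) \<and> \<epsilon> 1 = 1"

definition bialg_map :: "('k::field \<Rightarrow> 'a::ring_1 \<Rightarrow> 'a) \<Rightarrow> ('a \<Rightarrow> ('a \<times> 'a) list) \<Rightarrow> ('a \<Rightarrow> 'k)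
    \<Rightarrow> ('k \<Rightarrow> 'b::ring_1 \<Rightarrow> 'b) \<Rightarrow> ('b \<Rightarrow> ('b \<times> 'b) list) \<Rightarrow> ('b \<Rightarrow> 'k) \<Rightarrow> ('a \<Rightarrow> 'b) \<Rightarrow> bool" where
  "bialg_map sa \<Delta>a \<epsilon>a sb \<Delta>b \<epsilon>b f \<longleftrightarrow>
     (\<forall>c x y. f (sa c x + y) = sb c (f x) + f y) \<and>
     f 1 = 1 \<and> (\<forall>x y. f (x * y) = f x * f y) \<and>
     (\<forall>x. \<epsilon>b (f x) = \<epsilon>a x) \<and>
     (\<forall>x. teq2 sb sb (\<Delta>b (f x)) (map (\<lambda>(p,q). (f p, f q)) (\<Delta>a x)))"

definition pairing :: "('k::field \<Rightarrow> 'u::ring_1 \<Rightarrow> 'u) \<Rightarrow> ('u \<Rightarrow> ('u \<times> 'u) list) \<Rightarrow> ('u \<Rightarrow> 'k)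
    \<Rightarrow> ('k \<Rightarrow> 'v::ring_1 \<Rightarrow> 'v) \<Rightarrow> ('v \<Rightarrow> ('v \<times> 'v) list) \<Rightarrow> ('v \<Rightarrow> 'k) \<Rightarrow> ('u \<Rightarrow> 'v \<Rightarrow> 'k) \<Rightarrow> bool" where
  "pairing sU \<Delta>U \<epsilon>U sV \<Delta>V \<epsilon>V p \<longleftrightarrow>
     bilin_form sU sV p \<and>
     (\<forall>m n x. p (m * n) x = (\<Sum>(x1,x2)\<leftarrow>\<Delta>V x. p m x1 * p n x2)) \<and>
     (\<forall>m x y. p m (x * y) = (\<Sum>(m1,m2)\<leftarrow>\<Delta>U m. p m1 x * p m2 y)) \<and>
     (\<forall>x. p 1 x = \<epsilon>V x) \<and> (\<forall>m. p m 1 = \<epsilon>U m)"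

text \<open>\<sigma> is the convolution inverse of \<rho> in Hom(U^cop \<otimes> V, k), both given as
  bilinear forms on U \<times> V; the coalgebra U^cop \<otimes> V has
  \<Delta>(m \<otimes> x) = (m2 \<otimes> x1) \<otimes> (m1 \<otimes> x2).\<close>
definition conv_inverse :: "('k::field \<Rightarrow> 'u::ring_1 \<Rightarrow> 'u) \<Rightarrow> ('u \<Rightarrow> ('u \<times> 'u) list) \<Rightarrow> ('u \<Rightarrow> 'k)
    \<Rightarrow> ('k \<Rightarrow> 'v::ring_1 \<Rightarrow> 'v) \<Rightarrow> ('v \<Rightarrow> ('v \<times> 'v) list) \<Rightarrow> ('v \<Rightarrow> 'k)
    \<Rightarrow> ('u \<Rightarrow> 'v \<Rightarrow> 'k) \<Rightarrow> ('u \<Rightarrow> 'v \<Rightarrow> 'k) \<Rightarrow> bool" where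
  "conv_inverse sU \<Delta>U \<epsilon>U sV \<Delta>V \<epsilon>V \<rho> \<sigma> \<longleftrightarrow>
     bilin_form sU sV \<sigma> \<and>
     (\<forall>m x. (\<Sum>(m1,m2)\<leftarrow>\<Delta>U m. \<Sum>(x1,x2)\<leftarrow>\<Delta>V x. \<rho> m2 x1 * \<sigma> m1 x2) = \<epsilon>U m * \<epsilon>V x) \<and>
     (\<forall>m x. (\<Sum>(m1,m2)\<leftarrow>\<Delta>U m. \<Sum>(x1,x2)\<leftarrow>\<Delta>V x. \<sigma> m2 x1 * \<rho> m1 x2) = \<epsilon>U m * \<epsilon>V x)"

text \<open>Product in D(U^cop,V) of elementary tensors, pushed through a linear map on
  U \<otimes> V given by the bilinear map P (i.e. P(m,x) = \<pi>(m \<otimes> x)):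
  \<pi>((m \<otimes> x)(n \<otimes> y)) = \<Sum> \<rho>(n3,x1) rho_inv(n1,x3) \<pi>(m n2 \<otimes> x2 y).\<close>
definition D_prod_image :: "('u \<Rightarrow> ('u \<times> 'u) list) \<Rightarrow> ('v \<Rightarrow> ('v \<times> 'v) list)
    \<Rightarrow> ('u \<Rightarrow> 'v \<Rightarrow> 'k::field) \<Rightarrow> ('u \<Rightarrow> 'v \<Rightarrow> 'k) \<Rightarrow> ('k \<Rightarrow> 'w \<Rightarrow> 'w)
    \<Rightarrow> ('u::ring_1 \<Rightarrow> 'v::ring_1 \<Rightarrow> 'w::ab_group_add) \<Rightarrow> 'u \<Rightarrow> 'v \<Rightarrow> 'u \<Rightarrow> 'v \<Rightarrow> 'w" where
  "D_prod_image \<Delta>U \<Delta>V \<rho> \<sigma> sW P m x n y =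
     (\<Sum>(n1,n2,n3)\<leftarrow>comult2 \<Delta>U n. \<Sum>(x1,x2,x3)\<leftarrow>comult2 \<Delta>V x.
        sW (\<rho> n3 x1 * \<sigma> n1 x3) (P (m * n2) (x2 * y)))"

text \<open>P represents (via \<pi>(m \<otimes> x) = P m x) a bialgebra map
  \<pi> : D(U^cop,V) \<rightarrow> W. Linear maps U \<otimes> V \<rightarrow> W correspond exactly to bilinear maps
  U \<times> V \<rightarrow> W, and all conditions are linear, so checking them on elementary
  tensors suffices.\<close>
definition D_bialg_map :: "('k::field \<Rightarrow> 'u::ring_1 \<Rightarrow> 'u) \<Rightarrow> ('u \<Rightarrow> ('u \<times> 'u) list) \<Rightarrow> ('u \<Rightarrow> 'k)
    \<Rightarrow> ('k \<Rightarrow> 'v::ring_1 \<Rightarrow> 'v) \<Rightarrow> ('v \<Rightarrow> ('v \<times> 'v) list) \<Rightarrow> ('v \<Rightarrow> 'k)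
    \<Rightarrow> ('u \<Rightarrow> 'v \<Rightarrow> 'k) \<Rightarrow> ('u \<Rightarrow> 'v \<Rightarrow> 'k)
    \<Rightarrow> ('k \<Rightarrow> 'w::ring_1 \<Rightarrow> 'w) \<Rightarrow> ('w \<Rightarrow> ('w \<times> 'w) list) \<Rightarrow> ('w \<Rightarrow> 'k)
    \<Rightarrow> ('u \<Rightarrow> 'v \<Rightarrow> 'w) \<Rightarrow> bool" where
  "D_bialg_map sU \<Delta>U \<epsilon>U sV \<Delta>V \<epsilon>V \<rho> \<sigma> sW \<Delta>W \<epsilon>W P \<longleftrightarrow>
     bilin_map sU sV sW P \<and>
     P 1 1 = 1 \<and>
     (\<forall>m x n y. D_prod_image \<Delta>U \<Delta>V \<rho> \<sigma> sW P m x n y = P m x * P n y) \<and>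
     (\<forall>m x. \<epsilon>W (P m x) = \<epsilon>U m * \<epsilon>V x) \<and>
     (\<forall>m x. teq2 sW sW (\<Delta>W (P m x))
        (concat (map (\<lambda>(m1,m2). map (\<lambda>(x1,x2). (P m2 x1, P m1 x2)) (\<Delta>V x)) (\<Delta>U m))))"

end

theory Submission
  imports Defs
begin

(* The double crossproduct D = D(U^cop,V) contains U^cop = U \<otimes> 1 and V = 1 \<otimes> V as
   sub-bialgebras, m \<otimes> x = (m \<otimes> 1)(1 \<otimes> x), and its multiplication is governed by the
   straightening relation (1 \<otimes> y)(m \<otimes> 1) = \<rho>^-1(m1,y3) \<rho>(m3,y1) m2 \<otimes> y2.  Hence the
   bialgebra maps \<pi> : D \<rightarrow> W are exactly the maps \<pi>(m \<otimes> x) = f(m) g(x) built from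
   bialgebra maps f : U^cop \<rightarrow> W and g : V \<rightarrow> W satisfying this relation in W, namely
   f = \<pi> \<circ> i and g = \<pi> \<circ> j.  For (i) take W = U^cop and f = id, so that \<gamma> = g; for (ii)
   take W = V and g = id, so that \<mu> = f. *)

section \<open>Linear maps\<close>

definition lin_map :: "('k::field \<Rightarrow> 'a::ab_group_add \<Rightarrow> 'a) \<Rightarrow> ('k \<Rightarrow> 'b::ab_group_add \<Rightarrow> 'b)
    \<Rightarrow> ('a \<Rightarrow> 'b) \<Rightarrow> bool" where
  "lin_map sa sb g \<longleftrightarrow> (\<forall>c x y. g (sa c x + y) = sb c (g x) + g y)"

lemma vector_space_field: "vector_space ((*) :: 'k::field \<Rightarrow> 'k \<Rightarrow> 'k)"
  by unfold_locales (auto simp: algebra_simps)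

lemma lin_mapD: "lin_map sa sb g \<Longrightarrow> g (sa c x + y) = sb c (g x) + g y"
  by (simp add: lin_map_def)

context
  fixes sa :: "'k::field \<Rightarrow> 'a::ab_group_add \<Rightarrow> 'a" and sb :: "'k \<Rightarrow> 'b::ab_group_add \<Rightarrow> 'b"
    and g :: "'a \<Rightarrow> 'b"
  assumes sa: "vector_space sa" and sb: "vector_space sb" and g: "lin_map sa sb g"
begin

interpretation A: vector_space sa by (rule sa)
interpretation B: vector_space sb by (rule sb)

lemma lin_map_0: "g 0 = 0"
  using lin_mapD[OF g, of 1 0 0] by simp

lemma lin_map_add: "g (x + y) = g x + g y"
  using lin_mapD[OF g, of 1 x y] by simp

lemma lin_map_scale: "g (sa c x) = sb c (g x)"
  using lin_mapD[OF g, of c x 0] by (simp add: lin_map_0)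

lemma lin_map_sum_list: "g (sum_list (map f xs)) = sum_list (map (\<lambda>i. g (f i)) xs)"
  by (induction xs) (auto simp: lin_map_0 lin_map_add)

lemma lin_map_sum_list_scale:
  "g (\<Sum>(a,b)\<leftarrow>xs. sa (h a b) (k a b)) = (\<Sum>(a,b)\<leftarrow>xs. sb (h a b) (g (k a b)))"
  by (induction xs) (auto simp: lin_map_0 lin_map_add lin_map_scale)

end

lemma lin_map_comp: "lin_map sa sb g \<Longrightarrow> lin_map sb sc h \<Longrightarrow> lin_map sa sc (\<lambda>x. h (g x))"
  by (simp add: lin_map_def)

lemma lin_map_sum:
  assumes "vector_space sb" and "\<And>i. i \<in> set xs \<Longrightarrow> lin_map sa sb (\<lambda>x. g x i)"
  shows "lin_map sa sb (\<lambda>x. sum_list (map (g x) xs))"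
proof -
  interpret vector_space sb by fact
  show ?thesis using assms(2)
    by (induction xs) (auto simp: lin_map_def scale_right_distrib algebra_simps)
qed

lemma lin_map_sum_pairs:
  assumes "vector_space sb" and "\<And>a b. lin_map sa sb (\<lambda>x. g x a b)"
  shows "lin_map sa sb (\<lambda>x. \<Sum>(a,b)\<leftarrow>xs. g x a b)"
  by (rule lin_map_sum[OF assms(1)]) (auto simp: case_prod_beta' assms(2))

lemma lin_map_sum_triples:
  assumes "vector_space sb" and "\<And>a b c. lin_map sa sb (\<lambda>x. g x a b c)"
  shows "lin_map sa sb (\<lambda>x. \<Sum>(a,b,c)\<leftarrow>xs. g x a b c)"
  by (rule lin_map_sum[OF assms(1)]) (auto simp: case_prod_beta' assms(2))

lemma lin_map_scale_by:
  assumes "vector_space sW" and "lin_map sa (*) h"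
  shows "lin_map sa sW (\<lambda>x. sW (h x) w)"
proof -
  interpret vector_space sW by fact
  show ?thesis using assms(2) by (auto simp: lin_map_def scale_left_distrib)
qed

lemma lin_map_scale_const:
  assumes "vector_space sW" and "lin_map sa sW g"
  shows "lin_map sa sW (\<lambda>x. sW a (g x))"
proof -
  interpret vector_space sW by fact
  show ?thesis using assms(2) by (auto simp: lin_map_def scale_right_distrib mult.commute)
qed

lemma lin_map_mult_const: "lin_map sa (*) h \<Longrightarrow> lin_map sa (*) (\<lambda>x. h x * (a::'k::field))"
  and lin_map_const_mult: "lin_map sa (*) h \<Longrightarrow> lin_map sa (*) (\<lambda>x. (a::'k::field) * h x)"
  by (auto simp: lin_map_def algebra_simps)

lemma bilin_form_lin_map:
  assumes "bilin_form sa sb f"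
  shows "lin_map sa (*) (\<lambda>x. f x y)" and "lin_map sb (*) (f x)"
  using assms by (auto simp: bilin_form_def lin_map_def)

lemma bilin_map_lin_map:
  assumes "bilin_map sa sb sW f"
  shows "lin_map sa sW (\<lambda>x. f x y)" and "lin_map sb sW (f x)"
  using assms by (auto simp: bilin_map_def lin_map_def)

lemma scale_sum_list:
  assumes "vector_space s"
  shows "s c (sum_list (map f xs)) = sum_list (map (\<lambda>i. s c (f i)) xs)"
proof -
  interpret vector_space s by fact
  show ?thesis by (induction xs) (auto simp: scale_right_distrib)
qed

section \<open>Tensors as lists of elementary tensors\<close>

lemma sum_list_map_concat [simp]:
  "sum_list (map f (concat xss)) = sum_list (map (\<lambda>xs. sum_list (map f xs)) xss)"
  by (induction xss) auto

lemma sum_list_cop: "(\<Sum>(a,b)\<leftarrow>cop \<Delta> x. F a b) = (\<Sum>(a,b)\<leftarrow>\<Delta> x. F b a)"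
  by (simp add: cop_def o_def case_prod_beta')

lemma ex_lin_functional:
  assumes "vector_space s" and "w \<noteq> 0"
  shows "\<exists>\<phi>. lin_map s (*) \<phi> \<and> \<phi> w = (1::'k::field)"
proof -
  interpret vector_space s by fact
  interpret vector_space_pair s "(*) :: 'k \<Rightarrow> 'k \<Rightarrow> 'k"
    by unfold_locales (auto simp: algebra_simps)
  have "independent {w}" using assms(2) by simp
  then obtain \<phi> where \<phi>: "Vector_Spaces.linear s (*) \<phi>" "\<phi> w = 1"
    using linear_independent_extend[of "{w}" "\<lambda>_. 1"] by auto
  then have "lin_map s (*) \<phi>"
    by (simp add: lin_map_def linear_add[OF \<phi>(1)] linear_scale[OF \<phi>(1)])
  with \<phi>(2) show ?thesis by blast
qed

text \<open>Since linear functionals separate points, an equality of tensors in the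
  sense of \<open>teq2\<close> may be pushed through any bilinear map, not only through
  bilinear forms.\<close>
lemma teq2_sum_eq:
  assumes W: "vector_space sW" and t: "teq2 sa sb xs ys"
    and F1: "\<And>y. lin_map sa sW (\<lambda>x. F x y)" and F2: "\<And>x. lin_map sb sW (F x)"
  shows "(\<Sum>(a,b)\<leftarrow>xs. F a b) = (\<Sum>(a,b)\<leftarrow>ys. F a b)"
proof (rule ccontr)
  interpret vector_space sW by fact
  let ?d = "(\<Sum>(a,b)\<leftarrow>xs. F a b) - (\<Sum>(a,b)\<leftarrow>ys. F a b)"
  assume "(\<Sum>(a,b)\<leftarrow>xs. F a b) \<noteq> (\<Sum>(a,b)\<leftarrow>ys. F a b)"
  then obtain \<phi> where \<phi>: "lin_map sW (*) \<phi>" "\<phi> ?d = 1"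
    using ex_lin_functional[OF W, of ?d] by auto
  note lin = W vector_space_field \<phi>(1)
  have "bilin_form sa sb (\<lambda>a b. \<phi> (F a b))"
    unfolding bilin_form_def
    using lin_mapD[OF F1] lin_mapD[OF F2] lin_map_add[OF lin] lin_map_scale[OF lin] by simp
  then have "(\<Sum>(a,b)\<leftarrow>xs. \<phi> (F a b)) = (\<Sum>(a,b)\<leftarrow>ys. \<phi> (F a b))"
    using t unfolding teq2_def by blast
  then have "\<phi> (\<Sum>(a,b)\<leftarrow>xs. F a b) = \<phi> (\<Sum>(a,b)\<leftarrow>ys. F a b)"
    by (simp add: lin_map_sum_list[OF lin] case_prod_beta')
  moreover have "\<phi> ?d = \<phi> (\<Sum>(a,b)\<leftarrow>xs. F a b) - \<phi> (\<Sum>(a,b)\<leftarrow>ys. F a b)"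
    using lin_map_add[OF lin, of ?d "\<Sum>(a,b)\<leftarrow>ys. F a b"] by simp
  ultimately show False using \<phi>(2) by simp
qed

lemma teq2_swap:
  assumes "teq2 sa sb xs ys"
  shows "teq2 sb sa (map prod.swap xs) (map prod.swap ys)"
  unfolding teq2_def
proof (intro allI impI)
  fix f assume "bilin_form sb sa f"
  then have "bilin_form sa sb (\<lambda>a b. f b a)" by (simp add: bilin_form_def)
  with assms have "(\<Sum>(a,b)\<leftarrow>xs. f b a) = (\<Sum>(a,b)\<leftarrow>ys. f b a)"
    unfolding teq2_def by blast
  then show "(\<Sum>(a,b)\<leftarrow>map prod.swap xs. f a b) = (\<Sum>(a,b)\<leftarrow>map prod.swap ys. f a b)"
    by (simp add: o_def case_prod_beta')
qed

lemma teq3_rev: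
  assumes "teq3 sa sb sc xs ys"
  shows "teq3 sc sb sa (map (\<lambda>(a,b,c). (c,b,a)) ys) (map (\<lambda>(a,b,c). (c,b,a)) xs)"
  unfolding teq3_def
proof (intro allI impI)
  fix f assume "trilin_form sc sb sa f"
  then have "trilin_form sa sb sc (\<lambda>a b c. f c b a)" by (simp add: trilin_form_def)
  with assms have "(\<Sum>(a,b,c)\<leftarrow>xs. f c b a) = (\<Sum>(a,b,c)\<leftarrow>ys. f c b a)"
    unfolding teq3_def by blast
  then show "(\<Sum>(a,b,c)\<leftarrow>map (\<lambda>(a,b,c). (c,b,a)) ys. f a b c) =
      (\<Sum>(a,b,c)\<leftarrow>map (\<lambda>(a,b,c). (c,b,a)) xs. f a b c)"
    by (simp add: o_def case_prod_beta')
qed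

section \<open>Bialgebras\<close>

locale bialg =
  fixes s :: "'k::field \<Rightarrow> 'a::ring_1 \<Rightarrow> 'a" and \<Delta> :: "'a \<Rightarrow> ('a \<times> 'a) list" and \<epsilon> :: "'a \<Rightarrow> 'k"
  assumes bialgebra: "bialgebra s \<Delta> \<epsilon>"
begin

lemma vs: "vector_space s"
  using bialgebra by (simp add: bialgebra_def)

lemma scale_mult_left: "s c (x * y) = s c x * y"
  and scale_mult_right: "s c (x * y) = x * s c y"
  using bialgebra unfolding bialgebra_def by blast+

lemma lin_map_mult_left: "lin_map s s (\<lambda>x. a * x)"
proof -
  interpret vector_space s by (rule vs)
  show ?thesis by (auto simp: lin_map_def distrib_left scale_mult_right[symmetric])
qed

lemma lin_map_mult_right: "lin_map s s (\<lambda>x. x * a)"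
proof -
  interpret vector_space s by (rule vs)
  show ?thesis by (auto simp: lin_map_def distrib_right scale_mult_left[symmetric])
qed

lemma lin_map_counit: "lin_map s (*) \<epsilon>"
  using bialgebra by (simp add: bialgebra_def lin_map_def)

lemma counit_mult: "\<epsilon> (x * y) = \<epsilon> x * \<epsilon> y"
  and counit_one: "\<epsilon> 1 = 1"
  using bialgebra by (auto simp: bialgebra_def)

lemma counit_left: "(\<Sum>(a,b)\<leftarrow>\<Delta> m. s (\<epsilon> a) b) = m"
  and counit_right: "(\<Sum>(a,b)\<leftarrow>\<Delta> m. s (\<epsilon> b) a) = m"
  using bialgebra by (auto simp: bialgebra_def)

lemma counit_left_lin_map:
  assumes "vector_space sW" and "lin_map s sW g"
  shows "(\<Sum>(a,b)\<leftarrow>\<Delta> m. sW (\<epsilon> a) (g b)) = g m"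
  using lin_map_sum_list_scale[OF vs assms, of "\<lambda>a b. \<epsilon> a" "\<lambda>a b. b" "\<Delta> m"]
  by (simp add: counit_left)

lemma counit_right_lin_map:
  assumes "vector_space sW" and "lin_map s sW g"
  shows "(\<Sum>(a,b)\<leftarrow>\<Delta> m. sW (\<epsilon> b) (g a)) = g m"
  using lin_map_sum_list_scale[OF vs assms, of "\<lambda>a b. \<epsilon> b" "\<lambda>a b. a" "\<Delta> m"]
  by (simp add: counit_right)

context
  fixes sW :: "'k \<Rightarrow> 'w::ab_group_add \<Rightarrow> 'w" and F :: "'a \<Rightarrow> 'a \<Rightarrow> 'w"
  assumes W: "vector_space sW"
    and F1: "\<And>y. lin_map s sW (\<lambda>x. F x y)" and F2: "\<And>x. lin_map s sW (F x)"
begin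

lemma lin_map_sum_comult: "lin_map s sW (\<lambda>m. \<Sum>(a,b)\<leftarrow>\<Delta> m. F a b)"
  unfolding lin_map_def
proof (intro allI)
  fix c x y
  have "teq2 s s (\<Delta> (s c x + y)) (map (\<lambda>(p,q). (s c p, q)) (\<Delta> x) @ \<Delta> y)"
    using bialgebra by (simp add: bialgebra_def)
  then have "(\<Sum>(a,b)\<leftarrow>\<Delta> (s c x + y). F a b) = (\<Sum>(a,b)\<leftarrow>map (\<lambda>(p,q). (s c p, q)) (\<Delta> x) @ \<Delta> y. F a b)"
    by (rule teq2_sum_eq[OF W _ F1 F2])
  also have "\<dots> = (\<Sum>(p,q)\<leftarrow>\<Delta> x. sW c (F p q)) + (\<Sum>(a,b)\<leftarrow>\<Delta> y. F a b)"
    using lin_map_scale[OF vs W F1] by (simp add: o_def case_prod_beta')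
  also have "\<dots> = sW c (\<Sum>(a,b)\<leftarrow>\<Delta> x. F a b) + (\<Sum>(a,b)\<leftarrow>\<Delta> y. F a b)"
    using scale_sum_list[OF W, of c "\<lambda>(a,b). F a b" "\<Delta> x"] by (simp add: case_prod_beta')
  finally show "(\<Sum>(a,b)\<leftarrow>\<Delta> (s c x + y). F a b) = sW c (\<Sum>(a,b)\<leftarrow>\<Delta> x. F a b) + (\<Sum>(a,b)\<leftarrow>\<Delta> y. F a b)" .
qed

lemma sum_comult_one: "(\<Sum>(a,b)\<leftarrow>\<Delta> 1. F a b) = F 1 1"
proof -
  have "teq2 s s (\<Delta> 1) [(1,1)]"
    using bialgebra by (simp add: bialgebra_def)
  from teq2_sum_eq[OF W this F1 F2] show ?thesis by simp
qed

lemma sum_comult_mult: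
  "(\<Sum>(a,b)\<leftarrow>\<Delta> (x * y). F a b) = (\<Sum>(a,b)\<leftarrow>\<Delta> x. \<Sum>(c,d)\<leftarrow>\<Delta> y. F (a * c) (b * d))"
proof -
  have "teq2 s s (\<Delta> (x * y)) (concat (map (\<lambda>(a,b). map (\<lambda>(c,d). (a * c, b * d)) (\<Delta> y)) (\<Delta> x)))"
    using bialgebra by (simp add: bialgebra_def)
  from teq2_sum_eq[OF W this F1 F2] show ?thesis
    by (simp add: o_def case_prod_beta')
qed

end

lemma sum_comult2_counit:
  assumes W: "vector_space sW" and g: "lin_map s sW g"
  shows "(\<Sum>(a,b,c)\<leftarrow>comult2 \<Delta> x. sW (\<epsilon> a * \<epsilon> c) (g b)) = g x"
proof -
  have inner: "(\<Sum>(c,d)\<leftarrow>\<Delta> a. sW (\<epsilon> c * \<epsilon> b) (g d)) = sW (\<epsilon> b) (g a)" for a b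
  proof -
    interpret vector_space sW by (rule W)
    have "(\<Sum>(c,d)\<leftarrow>\<Delta> a. sW (\<epsilon> c * \<epsilon> b) (g d)) = sW (\<epsilon> b) (\<Sum>(c,d)\<leftarrow>\<Delta> a. sW (\<epsilon> c) (g d))"
      using scale_sum_list[OF W, of "\<epsilon> b" "\<lambda>(c,d). sW (\<epsilon> c) (g d)" "\<Delta> a"]
      by (simp add: case_prod_beta' mult.commute)
    then show ?thesis by (simp add: counit_left_lin_map[OF W g])
  qed
  have "(\<Sum>(a,b,c)\<leftarrow>comult2 \<Delta> x. sW (\<epsilon> a * \<epsilon> c) (g b)) =
      (\<Sum>(a,b)\<leftarrow>\<Delta> x. \<Sum>(c,d)\<leftarrow>\<Delta> a. sW (\<epsilon> c * \<epsilon> b) (g d))"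
    by (simp add: comult2_def o_def case_prod_beta')
  also have "\<dots> = (\<Sum>(a,b)\<leftarrow>\<Delta> x. sW (\<epsilon> b) (g a))"
    by (simp add: inner)
  also have "\<dots> = g x" by (rule counit_right_lin_map[OF W g])
  finally show ?thesis .
qed

lemma sum_comult2_one:
  assumes W: "vector_space sW" and F1: "\<And>y z. lin_map s sW (\<lambda>x. F x y z)"
    and F2: "\<And>x z. lin_map s sW (\<lambda>y. F x y z)" and F3: "\<And>x y. lin_map s sW (F x y)"
  shows "(\<Sum>(a,b,c)\<leftarrow>comult2 \<Delta> 1. F a b c) = F 1 1 1"
proof -
  have "(\<Sum>(a,b,c)\<leftarrow>comult2 \<Delta> 1. F a b c) = (\<Sum>(a,b)\<leftarrow>\<Delta> 1. \<Sum>(c,d)\<leftarrow>\<Delta> a. F c d b)"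
    by (simp add: comult2_def o_def case_prod_beta')
  also have "\<dots> = (\<Sum>(c,d)\<leftarrow>\<Delta> 1. F c d 1)"
  proof (rule sum_comult_one[OF W])
    show "lin_map s sW (\<lambda>x. \<Sum>(c,d)\<leftarrow>\<Delta> x. F c d y)" for y
      by (rule lin_map_sum_comult[OF W F1 F2])
    show "lin_map s sW (\<lambda>y. \<Sum>(c,d)\<leftarrow>\<Delta> x. F c d y)" for x
      by (rule lin_map_sum_pairs[OF W F3])
  qed
  also have "\<dots> = F 1 1 1" by (rule sum_comult_one[OF W F1 F2])
  finally show ?thesis .
qed

end

lemma bialgebra_cop:
  assumes "bialgebra s \<Delta> \<epsilon>"
  shows "bialgebra s (cop \<Delta>) \<epsilon>"
proof -
  interpret bialg s \<Delta> \<epsilon> using assms by (rule bialg.intro)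
  have add: "teq2 s s (cop \<Delta> (s c x + y)) (map (\<lambda>(p,q). (s c p, q)) (cop \<Delta> x) @ cop \<Delta> y)" for c x y
    unfolding teq2_def
  proof (intro allI impI)
    fix f assume f: "bilin_form s s f"
    note f1 = bilin_form_lin_map(1)[OF f] and f2 = bilin_form_lin_map(2)[OF f]
    have "(\<Sum>(a,b)\<leftarrow>\<Delta> (s c x + y). f b a) = c * (\<Sum>(a,b)\<leftarrow>\<Delta> x. f b a) + (\<Sum>(a,b)\<leftarrow>\<Delta> y. f b a)"
      by (rule lin_mapD[OF lin_map_sum_comult[OF vector_space_field f2 f1]])
    then show "(\<Sum>(a,b)\<leftarrow>cop \<Delta> (s c x + y). f a b) =
        (\<Sum>(a,b)\<leftarrow>map (\<lambda>(p,q). (s c p, q)) (cop \<Delta> x) @ cop \<Delta> y. f a b)"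
      by (simp add: sum_list_cop cop_def o_def case_prod_beta' lin_map_scale[OF vs vector_space_field f1]
          sum_list_const_mult)
  qed
  have coassoc: "teq3 s s s (comult2 (cop \<Delta>) m)
      (concat (map (\<lambda>(a,b). map (\<lambda>(c,d). (a,c,d)) (cop \<Delta> b)) (cop \<Delta> m)))" for m
  proof -
    have "teq3 s s s (comult2 \<Delta> m) (concat (map (\<lambda>(a,b). map (\<lambda>(c,d). (a,c,d)) (\<Delta> b)) (\<Delta> m)))"
      using bialgebra by (simp add: bialgebra_def)
    from teq3_rev[OF this] show ?thesis
      by (simp add: comult2_def cop_def map_concat o_def case_prod_beta' prod.swap_def)
  qed
  have mult: "teq2 s s (cop \<Delta> (x * y))
      (concat (map (\<lambda>(a,b). map (\<lambda>(c,d). (a * c, b * d)) (cop \<Delta> y)) (cop \<Delta> x)))" for x y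
  proof -
    have "teq2 s s (\<Delta> (x * y)) (concat (map (\<lambda>(a,b). map (\<lambda>(c,d). (a * c, b * d)) (\<Delta> y)) (\<Delta> x)))"
      using bialgebra by (simp add: bialgebra_def)
    from teq2_swap[OF this] show ?thesis
      by (simp add: cop_def map_concat o_def case_prod_beta')
  qed
  have unit: "teq2 s s (cop \<Delta> 1) [(1,1)]"
    using teq2_swap[of s s "\<Delta> 1" "[(1,1)]"] bialgebra by (simp add: bialgebra_def cop_def)
  have counit: "(\<Sum>(a,b)\<leftarrow>cop \<Delta> m. s (\<epsilon> a) b) = m" "(\<Sum>(a,b)\<leftarrow>cop \<Delta> m. s (\<epsilon> b) a) = m" for m
    by (simp_all add: sum_list_cop counit_left counit_right)
  show ?thesis
    unfolding bialgebra_def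
    using vs scale_mult_left scale_mult_right add lin_mapD[OF lin_map_counit] coassoc counit mult unit
      counit_mult counit_one
    by blast
qed

lemma bialg_map_id: "bialg_map s \<Delta> \<epsilon> s \<Delta> \<epsilon> (\<lambda>x. x)"
  by (simp add: bialg_map_def teq2_def case_prod_beta')

lemma (in bialg) teq2_comult_mult_bialg_maps:
  assumes f: "bialg_map sU (cop \<Delta>U) \<epsilon>U s \<Delta> \<epsilon> f" and g: "bialg_map sV \<Delta>V \<epsilon>V s \<Delta> \<epsilon> g"
  shows "teq2 s s (\<Delta> (f m * g x))
    (concat (map (\<lambda>(m1,m2). map (\<lambda>(x1,x2). (f m2 * g x1, f m1 * g x2)) (\<Delta>V x)) (\<Delta>U m)))"
  unfolding teq2_def
proof (intro allI impI)
  fix \<phi> assume \<phi>: "bilin_form s s \<phi>"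
  note \<phi>1 = bilin_form_lin_map(1)[OF \<phi>] and \<phi>2 = bilin_form_lin_map(2)[OF \<phi>]
  have f_comult: "teq2 s s (\<Delta> (f m)) (map (\<lambda>(p,q). (f p, f q)) (cop \<Delta>U m))"
    and g_comult: "teq2 s s (\<Delta> (g x)) (map (\<lambda>(p,q). (g p, g q)) (\<Delta>V x))"
    using f g by (simp_all add: bialg_map_def)
  have "(\<Sum>(a,b)\<leftarrow>\<Delta> (f m * g x). \<phi> a b) = (\<Sum>(a,b)\<leftarrow>\<Delta> (f m). \<Sum>(c,d)\<leftarrow>\<Delta> (g x). \<phi> (a * c) (b * d))"
    by (rule sum_comult_mult[OF vector_space_field]) (auto intro: \<phi>1 \<phi>2)
  also have "\<dots> = (\<Sum>(a,b)\<leftarrow>map (\<lambda>(p,q). (f p, f q)) (cop \<Delta>U m). \<Sum>(c,d)\<leftarrow>\<Delta> (g x). \<phi> (a * c) (b * d))"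
    by (rule teq2_sum_eq[OF vector_space_field f_comult])
      (auto intro!: lin_map_sum_pairs[OF vector_space_field] lin_map_comp[OF lin_map_mult_right] \<phi>1 \<phi>2)
  also have "\<dots> = (\<Sum>(a,b)\<leftarrow>map (\<lambda>(p,q). (f p, f q)) (cop \<Delta>U m).
      \<Sum>(c,d)\<leftarrow>map (\<lambda>(p,q). (g p, g q)) (\<Delta>V x). \<phi> (a * c) (b * d))"
    by (subst teq2_sum_eq[OF vector_space_field g_comult])
      (auto intro!: lin_map_comp[OF lin_map_mult_left] \<phi>1 \<phi>2)
  finally show "(\<Sum>(a,b)\<leftarrow>\<Delta> (f m * g x). \<phi> a b) = (\<Sum>(a,b)\<leftarrow>concat
      (map (\<lambda>(m1,m2). map (\<lambda>(x1,x2). (f m2 * g x1, f m1 * g x2)) (\<Delta>V x)) (\<Delta>U m)). \<phi> a b)"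
    by (simp add: cop_def o_def case_prod_beta')
qed

section \<open>Bialgebra maps out of the double crossproduct\<close>

text \<open>The straightening relation of \<open>D(U^cop,V)\<close>, with \<open>f\<close> and \<open>g\<close> in the roles
  of \<open>i\<close> and \<open>j\<close>.\<close>
definition D_compatible :: "('u \<Rightarrow> ('u \<times> 'u) list) \<Rightarrow> ('v \<Rightarrow> ('v \<times> 'v) list)
    \<Rightarrow> ('u \<Rightarrow> 'v \<Rightarrow> 'k::field) \<Rightarrow> ('u \<Rightarrow> 'v \<Rightarrow> 'k) \<Rightarrow> ('k \<Rightarrow> 'w \<Rightarrow> 'w)
    \<Rightarrow> ('u \<Rightarrow> 'w::ring_1) \<Rightarrow> ('v \<Rightarrow> 'w) \<Rightarrow> bool" where
  "D_compatible \<Delta>U \<Delta>V \<rho> \<sigma> sW f g \<longleftrightarrow>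
     (\<forall>y m. g y * f m =
        (\<Sum>(m1,m2,m3)\<leftarrow>comult2 \<Delta>U m. \<Sum>(y1,y2,y3)\<leftarrow>comult2 \<Delta>V y.
           sW (\<sigma> m1 y3 * \<rho> m3 y1) (f m2 * g y2)))"

locale invertible_pairing = U: bialg sU \<Delta>U \<epsilon>U + V: bialg sV \<Delta>V \<epsilon>V
  for sU :: "'k::field \<Rightarrow> 'u::ring_1 \<Rightarrow> 'u" and \<Delta>U \<epsilon>U
    and sV :: "'k \<Rightarrow> 'v::ring_1 \<Rightarrow> 'v" and \<Delta>V \<epsilon>V +
  fixes \<rho> \<sigma> :: "'u \<Rightarrow> 'v \<Rightarrow> 'k"
  assumes pairing: "pairing sU \<Delta>U \<epsilon>U sV \<Delta>V \<epsilon>V \<rho>"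
    and conv_inverse: "conv_inverse sU \<Delta>U \<epsilon>U sV \<Delta>V \<epsilon>V \<rho> \<sigma>"
begin

lemma lin_map_rho_left: "lin_map sU (*) (\<lambda>m. \<rho> m x)"
  and lin_map_rho_right: "lin_map sV (*) (\<rho> m)"
  using pairing by (auto simp: pairing_def bilin_form_def lin_map_def)

lemma lin_map_sigma_left: "lin_map sU (*) (\<lambda>m. \<sigma> m x)"
  and lin_map_sigma_right: "lin_map sV (*) (\<sigma> m)"
  using conv_inverse by (auto simp: conv_inverse_def bilin_form_def lin_map_def)

lemma rho_one_left: "\<rho> 1 x = \<epsilon>V x"
  and rho_one_right: "\<rho> m 1 = \<epsilon>U m"
  using pairing by (auto simp: pairing_def)

lemma sigma_one_left: "\<sigma> 1 x = \<epsilon>V x"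
proof -
  have "\<epsilon>V x = (\<Sum>(m1,m2)\<leftarrow>\<Delta>U 1. \<Sum>(x1,x2)\<leftarrow>\<Delta>V x. \<rho> m2 x1 * \<sigma> m1 x2)"
    using conv_inverse U.counit_one by (simp add: conv_inverse_def)
  also have "\<dots> = (\<Sum>(x1,x2)\<leftarrow>\<Delta>V x. \<epsilon>V x1 * \<sigma> 1 x2)"
    by (subst U.sum_comult_one[OF vector_space_field])
      (auto intro!: lin_map_sum_pairs[OF vector_space_field] lin_map_mult_const lin_map_const_mult
        lin_map_rho_left lin_map_sigma_left simp: rho_one_left)
  also have "\<dots> = \<sigma> 1 x"
    using V.counit_left_lin_map[OF vector_space_field lin_map_sigma_right] by simp
  finally show ?thesis by simp
qed

lemma sigma_one_right: "\<sigma> m 1 = \<epsilon>U m"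
proof -
  have "\<epsilon>U m = (\<Sum>(m1,m2)\<leftarrow>\<Delta>U m. \<Sum>(x1,x2)\<leftarrow>\<Delta>V 1. \<rho> m2 x1 * \<sigma> m1 x2)"
    using conv_inverse V.counit_one by (simp add: conv_inverse_def)
  also have "\<dots> = (\<Sum>(m1,m2)\<leftarrow>\<Delta>U m. \<epsilon>U m2 * \<sigma> m1 1)"
    by (subst V.sum_comult_one[OF vector_space_field])
      (auto intro!: lin_map_mult_const lin_map_const_mult lin_map_rho_right lin_map_sigma_right
        simp: rho_one_right)
  also have "\<dots> = \<sigma> m 1"
    using U.counit_right_lin_map[OF vector_space_field lin_map_sigma_left] by (simp add: mult.commute)
  finally show ?thesis by simp
qed

context
  fixes sW :: "'k::field \<Rightarrow> 'w::ring_1 \<Rightarrow> 'w" and P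
  assumes W: "vector_space sW" and P: "bilin_map sU sV sW P"
begin

lemma D_prod_image_times_j: "D_prod_image \<Delta>U \<Delta>V \<rho> \<sigma> sW P m x 1 y = P m (x * y)"
proof -
  note P1 = bilin_map_lin_map(1)[OF P] and P2 = bilin_map_lin_map(2)[OF P]
  have "D_prod_image \<Delta>U \<Delta>V \<rho> \<sigma> sW P m x 1 y =
     (\<Sum>(x1,x2,x3)\<leftarrow>comult2 \<Delta>V x. sW (\<rho> 1 x1 * \<sigma> 1 x3) (P (m * 1) (x2 * y)))"
    unfolding D_prod_image_def
    by (rule U.sum_comult2_one[OF W])
      (auto intro!: lin_map_sum_triples[OF W] lin_map_scale_by[OF W] lin_map_scale_const[OF W]
        lin_map_mult_const lin_map_const_mult lin_map_rho_left lin_map_sigma_left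
        lin_map_comp[OF U.lin_map_mult_left P1])
  also have "\<dots> = (\<Sum>(x1,x2,x3)\<leftarrow>comult2 \<Delta>V x. sW (\<epsilon>V x1 * \<epsilon>V x3) (P m (x2 * y)))"
    by (simp add: rho_one_left sigma_one_left)
  also have "\<dots> = P m (x * y)"
    by (rule V.sum_comult2_counit[OF W lin_map_comp[OF V.lin_map_mult_right P2]])
  finally show ?thesis .
qed

lemma D_prod_image_i_times: "D_prod_image \<Delta>U \<Delta>V \<rho> \<sigma> sW P m 1 n y = P (m * n) y"
proof -
  note P1 = bilin_map_lin_map(1)[OF P] and P2 = bilin_map_lin_map(2)[OF P]
  have "D_prod_image \<Delta>U \<Delta>V \<rho> \<sigma> sW P m 1 n y =
     (\<Sum>(n1,n2,n3)\<leftarrow>comult2 \<Delta>U n. sW (\<rho> n3 1 * \<sigma> n1 1) (P (m * n2) (1 * y)))"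
    unfolding D_prod_image_def
    by (subst V.sum_comult2_one[OF W])
      (auto intro!: lin_map_scale_by[OF W] lin_map_scale_const[OF W] lin_map_mult_const
        lin_map_const_mult lin_map_rho_right lin_map_sigma_right lin_map_comp[OF V.lin_map_mult_right P2])
  also have "\<dots> = (\<Sum>(n1,n2,n3)\<leftarrow>comult2 \<Delta>U n. sW (\<epsilon>U n1 * \<epsilon>U n3) (P (m * n2) y))"
    by (simp add: rho_one_right sigma_one_right mult.commute)
  also have "\<dots> = P (m * n) y"
    by (rule U.sum_comult2_counit[OF W lin_map_comp[OF U.lin_map_mult_left P1]])
  finally show ?thesis .
qed

end

context
  fixes sW :: "'k::field \<Rightarrow> 'w::ring_1 \<Rightarrow> 'w" and \<Delta>W \<epsilon>W and P
  assumes W: "vector_space sW" and P: "D_bialg_map sU \<Delta>U \<epsilon>U sV \<Delta>V \<epsilon>V \<rho> \<sigma> sW \<Delta>W \<epsilon>W P"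
begin

lemma D_bialg_map_bilin_map: "bilin_map sU sV sW P"
  and D_bialg_map_one: "P 1 1 = 1"
  and D_bialg_map_mult: "D_prod_image \<Delta>U \<Delta>V \<rho> \<sigma> sW P m x n y = P m x * P n y"
  and D_bialg_map_counit: "\<epsilon>W (P m x) = \<epsilon>U m * \<epsilon>V x"
  using P by (auto simp: D_bialg_map_def)

lemma D_bialg_map_sum_comult:
  assumes f: "bilin_form sW sW f"
  shows "(\<Sum>(a,b)\<leftarrow>\<Delta>W (P m x). f a b) = (\<Sum>(m1,m2)\<leftarrow>\<Delta>U m. \<Sum>(x1,x2)\<leftarrow>\<Delta>V x. f (P m2 x1) (P m1 x2))"
proof -
  have "teq2 sW sW (\<Delta>W (P m x))
      (concat (map (\<lambda>(m1,m2). map (\<lambda>(x1,x2). (P m2 x1, P m1 x2)) (\<Delta>V x)) (\<Delta>U m)))"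
    using P by (simp add: D_bialg_map_def)
  from teq2_sum_eq[OF vector_space_field this bilin_form_lin_map[OF f]] show ?thesis
    by (simp add: o_def case_prod_beta')
qed

lemma D_bialg_map_factor: "P m x = P m 1 * P 1 x"
  using D_prod_image_i_times[OF W D_bialg_map_bilin_map, of m 1 x] D_bialg_map_mult by simp

lemma bialg_map_restrict_U: "bialg_map sU (cop \<Delta>U) \<epsilon>U sW \<Delta>W \<epsilon>W (\<lambda>m. P m 1)"
  unfolding bialg_map_def
proof (intro conjI allI)
  note P1 = bilin_map_lin_map(1)[OF D_bialg_map_bilin_map]
  show "P (sU c m + n) 1 = sW c (P m 1) + P n 1" for c m n
    using P1 by (rule lin_mapD)
  show "P 1 1 = 1" by (rule D_bialg_map_one)
  show "P (m * n) 1 = P m 1 * P n 1" for m n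
    using D_prod_image_i_times[OF W D_bialg_map_bilin_map, of m n 1] D_bialg_map_mult by simp
  show "\<epsilon>W (P m 1) = \<epsilon>U m" for m
    by (simp add: D_bialg_map_counit V.counit_one)
  show "teq2 sW sW (\<Delta>W (P m 1)) (map (\<lambda>(p,q). (P p 1, P q 1)) (cop \<Delta>U m))" for m
    unfolding teq2_def
  proof (intro allI impI)
    fix f assume f: "bilin_form sW sW f"
    have "(\<Sum>(a,b)\<leftarrow>\<Delta>W (P m 1). f a b) = (\<Sum>(m1,m2)\<leftarrow>\<Delta>U m. \<Sum>(x1,x2)\<leftarrow>\<Delta>V 1. f (P m2 x1) (P m1 x2))"
      by (rule D_bialg_map_sum_comult[OF f])
    also have "\<dots> = (\<Sum>(m1,m2)\<leftarrow>\<Delta>U m. f (P m2 1) (P m1 1))"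
      by (subst V.sum_comult_one[OF vector_space_field])
        (auto intro!: lin_map_comp[OF bilin_map_lin_map(2)[OF D_bialg_map_bilin_map]] bilin_form_lin_map[OF f])
    finally show "(\<Sum>(a,b)\<leftarrow>\<Delta>W (P m 1). f a b) = (\<Sum>(a,b)\<leftarrow>map (\<lambda>(p,q). (P p 1, P q 1)) (cop \<Delta>U m). f a b)"
      by (simp add: cop_def o_def case_prod_beta')
  qed
qed

lemma bialg_map_restrict_V: "bialg_map sV \<Delta>V \<epsilon>V sW \<Delta>W \<epsilon>W (P 1)"
  unfolding bialg_map_def
proof (intro conjI allI)
  note P2 = bilin_map_lin_map(2)[OF D_bialg_map_bilin_map]
  show "P 1 (sV c x + y) = sW c (P 1 x) + P 1 y" for c x y
    using P2 by (rule lin_mapD)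
  show "P 1 1 = 1" by (rule D_bialg_map_one)
  show "P 1 (x * y) = P 1 x * P 1 y" for x y
    using D_prod_image_times_j[OF W D_bialg_map_bilin_map, of 1 x y] D_bialg_map_mult by simp
  show "\<epsilon>W (P 1 x) = \<epsilon>V x" for x
    by (simp add: D_bialg_map_counit U.counit_one)
  show "teq2 sW sW (\<Delta>W (P 1 x)) (map (\<lambda>(p,q). (P 1 p, P 1 q)) (\<Delta>V x))" for x
    unfolding teq2_def
  proof (intro allI impI)
    fix f assume f: "bilin_form sW sW f"
    have "(\<Sum>(a,b)\<leftarrow>\<Delta>W (P 1 x). f a b) = (\<Sum>(m1,m2)\<leftarrow>\<Delta>U 1. \<Sum>(x1,x2)\<leftarrow>\<Delta>V x. f (P m2 x1) (P m1 x2))"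
      by (rule D_bialg_map_sum_comult[OF f])
    also have "\<dots> = (\<Sum>(x1,x2)\<leftarrow>\<Delta>V x. f (P 1 x1) (P 1 x2))"
      by (subst U.sum_comult_one[OF vector_space_field])
        (auto intro!: lin_map_sum_pairs[OF vector_space_field]
          lin_map_comp[OF bilin_map_lin_map(1)[OF D_bialg_map_bilin_map]] bilin_form_lin_map[OF f])
    finally show "(\<Sum>(a,b)\<leftarrow>\<Delta>W (P 1 x). f a b) = (\<Sum>(a,b)\<leftarrow>map (\<lambda>(p,q). (P 1 p, P 1 q)) (\<Delta>V x). f a b)"
      by (simp add: o_def case_prod_beta')
  qed
qed

lemma D_compatible_restrict: "D_compatible \<Delta>U \<Delta>V \<rho> \<sigma> sW (\<lambda>m. P m 1) (P 1)"
  unfolding D_compatible_def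
proof (intro allI)
  fix y m
  have factor: "P (1 * n) (x * 1) = P n 1 * P 1 x" for n x
    using D_bialg_map_factor[of n x] by simp
  have "P 1 y * P m 1 = D_prod_image \<Delta>U \<Delta>V \<rho> \<sigma> sW P 1 y m 1"
    by (rule D_bialg_map_mult[symmetric])
  also have "\<dots> = (\<Sum>(m1,m2,m3)\<leftarrow>comult2 \<Delta>U m. \<Sum>(y1,y2,y3)\<leftarrow>comult2 \<Delta>V y.
      sW (\<sigma> m1 y3 * \<rho> m3 y1) (P m2 1 * P 1 y2))"
    unfolding D_prod_image_def by (simp only: factor) (simp add: mult.commute)
  finally show "P 1 y * P m 1 = (\<Sum>(m1,m2,m3)\<leftarrow>comult2 \<Delta>U m. \<Sum>(y1,y2,y3)\<leftarrow>comult2 \<Delta>V y.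
      sW (\<sigma> m1 y3 * \<rho> m3 y1) (P m2 1 * P 1 y2))" .
qed

end

lemma D_bialg_map_product:
  assumes W: "bialgebra sW \<Delta>W \<epsilon>W"
    and f: "bialg_map sU (cop \<Delta>U) \<epsilon>U sW \<Delta>W \<epsilon>W f" and g: "bialg_map sV \<Delta>V \<epsilon>V sW \<Delta>W \<epsilon>W g"
    and compatible: "D_compatible \<Delta>U \<Delta>V \<rho> \<sigma> sW f g"
  shows "D_bialg_map sU \<Delta>U \<epsilon>U sV \<Delta>V \<epsilon>V \<rho> \<sigma> sW \<Delta>W \<epsilon>W (\<lambda>m x. f m * g x)"
proof -
  interpret W: bialg sW \<Delta>W \<epsilon>W using W by (rule bialg.intro)
  have f_lin: "lin_map sU sW f" and f_one: "f 1 = 1" and f_mult: "\<And>m n. f (m * n) = f m * f n"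
    and f_counit: "\<And>m. \<epsilon>W (f m) = \<epsilon>U m"
    using f by (auto simp: bialg_map_def lin_map_def)
  have g_lin: "lin_map sV sW g" and g_one: "g 1 = 1" and g_mult: "\<And>x y. g (x * y) = g x * g y"
    and g_counit: "\<And>x. \<epsilon>W (g x) = \<epsilon>V x"
    using g by (auto simp: bialg_map_def lin_map_def)
  have "bilin_map sU sV sW (\<lambda>m x. f m * g x)"
    using lin_mapD[OF lin_map_comp[OF f_lin W.lin_map_mult_right]] lin_mapD[OF lin_map_comp[OF g_lin W.lin_map_mult_left]]
    unfolding bilin_map_def by blast
  moreover have "D_prod_image \<Delta>U \<Delta>V \<rho> \<sigma> sW (\<lambda>m x. f m * g x) m x n y = f m * g x * (f n * g y)" for m x n y
  proof -
    have "f m * g x * (f n * g y) = f m * (g x * f n) * g y" by (simp add: mult.assoc)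
    also have "\<dots> = f m * (\<Sum>(n1,n2,n3)\<leftarrow>comult2 \<Delta>U n. \<Sum>(x1,x2,x3)\<leftarrow>comult2 \<Delta>V x.
        sW (\<sigma> n1 x3 * \<rho> n3 x1) (f n2 * g x2)) * g y"
      using compatible by (simp add: D_compatible_def)
    also have "\<dots> = D_prod_image \<Delta>U \<Delta>V \<rho> \<sigma> sW (\<lambda>m x. f m * g x) m x n y"
      unfolding D_prod_image_def
      by (simp add: sum_list_const_mult[symmetric] sum_list_mult_const[symmetric] case_prod_beta'
          W.scale_mult_right[symmetric] W.scale_mult_left[symmetric] f_mult g_mult mult.assoc
          mult.commute[of "\<sigma> _ _"])
    finally show ?thesis by simp
  qed
  ultimately show ?thesis
    unfolding D_bialg_map_def
    by (simp add: f_one g_one W.counit_mult f_counit g_counit W.teq2_comult_mult_bialg_maps[OF f g])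
qed

lemma ex_retraction_U_iff:
  "(\<exists>P. D_bialg_map sU \<Delta>U \<epsilon>U sV \<Delta>V \<epsilon>V \<rho> \<sigma> sU (cop \<Delta>U) \<epsilon>U P \<and> (\<forall>m. P m 1 = m)) \<longleftrightarrow>
      (\<exists>\<gamma>. bialg_map sV \<Delta>V \<epsilon>V sU (cop \<Delta>U) \<epsilon>U \<gamma> \<and> D_compatible \<Delta>U \<Delta>V \<rho> \<sigma> sU (\<lambda>m. m) \<gamma>)"
proof
  assume "\<exists>P. D_bialg_map sU \<Delta>U \<epsilon>U sV \<Delta>V \<epsilon>V \<rho> \<sigma> sU (cop \<Delta>U) \<epsilon>U P \<and> (\<forall>m. P m 1 = m)"
  then obtain P where P: "D_bialg_map sU \<Delta>U \<epsilon>U sV \<Delta>V \<epsilon>V \<rho> \<sigma> sU (cop \<Delta>U) \<epsilon>U P"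
    and "\<forall>m. P m 1 = m" by blast
  then show "\<exists>\<gamma>. bialg_map sV \<Delta>V \<epsilon>V sU (cop \<Delta>U) \<epsilon>U \<gamma> \<and> D_compatible \<Delta>U \<Delta>V \<rho> \<sigma> sU (\<lambda>m. m) \<gamma>"
    using bialg_map_restrict_V[OF U.vs P] D_compatible_restrict[OF U.vs P] by auto
next
  assume "\<exists>\<gamma>. bialg_map sV \<Delta>V \<epsilon>V sU (cop \<Delta>U) \<epsilon>U \<gamma> \<and> D_compatible \<Delta>U \<Delta>V \<rho> \<sigma> sU (\<lambda>m. m) \<gamma>"
  then obtain \<gamma> where "bialg_map sV \<Delta>V \<epsilon>V sU (cop \<Delta>U) \<epsilon>U \<gamma>"
    and "D_compatible \<Delta>U \<Delta>V \<rho> \<sigma> sU (\<lambda>m. m) \<gamma>" by blast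
  with D_bialg_map_product[OF bialgebra_cop[OF U.bialgebra] bialg_map_id]
  show "\<exists>P. D_bialg_map sU \<Delta>U \<epsilon>U sV \<Delta>V \<epsilon>V \<rho> \<sigma> sU (cop \<Delta>U) \<epsilon>U P \<and> (\<forall>m. P m 1 = m)"
    by (intro exI[of _ "\<lambda>m x. m * \<gamma> x"]) (simp add: bialg_map_def)
qed

lemma ex_retraction_V_iff:
  "(\<exists>Q. D_bialg_map sU \<Delta>U \<epsilon>U sV \<Delta>V \<epsilon>V \<rho> \<sigma> sV \<Delta>V \<epsilon>V Q \<and> (\<forall>x. Q 1 x = x)) \<longleftrightarrow>
      (\<exists>\<mu>. bialg_map sU (cop \<Delta>U) \<epsilon>U sV \<Delta>V \<epsilon>V \<mu> \<and> D_compatible \<Delta>U \<Delta>V \<rho> \<sigma> sV \<mu> (\<lambda>y. y))"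
proof
  assume "\<exists>Q. D_bialg_map sU \<Delta>U \<epsilon>U sV \<Delta>V \<epsilon>V \<rho> \<sigma> sV \<Delta>V \<epsilon>V Q \<and> (\<forall>x. Q 1 x = x)"
  then obtain Q where Q: "D_bialg_map sU \<Delta>U \<epsilon>U sV \<Delta>V \<epsilon>V \<rho> \<sigma> sV \<Delta>V \<epsilon>V Q"
    and "\<forall>x. Q 1 x = x" by blast
  then have "Q 1 = (\<lambda>y. y)" by auto
  then show "\<exists>\<mu>. bialg_map sU (cop \<Delta>U) \<epsilon>U sV \<Delta>V \<epsilon>V \<mu> \<and> D_compatible \<Delta>U \<Delta>V \<rho> \<sigma> sV \<mu> (\<lambda>y. y)"
    using bialg_map_restrict_U[OF V.vs Q] D_compatible_restrict[OF V.vs Q] by auto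
next
  assume "\<exists>\<mu>. bialg_map sU (cop \<Delta>U) \<epsilon>U sV \<Delta>V \<epsilon>V \<mu> \<and> D_compatible \<Delta>U \<Delta>V \<rho> \<sigma> sV \<mu> (\<lambda>y. y)"
  then obtain \<mu> where \<mu>: "bialg_map sU (cop \<Delta>U) \<epsilon>U sV \<Delta>V \<epsilon>V \<mu>"
    and "D_compatible \<Delta>U \<Delta>V \<rho> \<sigma> sV \<mu> (\<lambda>y. y)" by blast
  with D_bialg_map_product[OF V.bialgebra \<mu> bialg_map_id]
  show "\<exists>Q. D_bialg_map sU \<Delta>U \<epsilon>U sV \<Delta>V \<epsilon>V \<rho> \<sigma> sV \<Delta>V \<epsilon>V Q \<and> (\<forall>x. Q 1 x = x)"
    by (intro exI[of _ "\<lambda>m x. \<mu> m * x"]) (simp add: bialg_map_def)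
qed

end

theorem mainTheorem3:
  fixes sU :: "'k::field \<Rightarrow> 'u::ring_1 \<Rightarrow> 'u" and \<Delta>U :: "'u \<Rightarrow> ('u \<times> 'u) list" and \<epsilon>U :: "'u \<Rightarrow> 'k"
    and sV :: "'k \<Rightarrow> 'v::ring_1 \<Rightarrow> 'v" and \<Delta>V :: "'v \<Rightarrow> ('v \<times> 'v) list" and \<epsilon>V :: "'v \<Rightarrow> 'k"
    and \<rho> \<sigma> :: "'u \<Rightarrow> 'v \<Rightarrow> 'k"
  assumes U: "bialgebra sU \<Delta>U \<epsilon>U"
    and V: "bialgebra sV \<Delta>V \<epsilon>V"
    and pair: "pairing sU \<Delta>U \<epsilon>U sV \<Delta>V \<epsilon>V \<rho>"
    and inv: "conv_inverse sU \<Delta>U \<epsilon>U sV \<Delta>V \<epsilon>V \<rho> \<sigma>"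
  shows
    "((\<exists>P. D_bialg_map sU \<Delta>U \<epsilon>U sV \<Delta>V \<epsilon>V \<rho> \<sigma> sU (cop \<Delta>U) \<epsilon>U P \<and> (\<forall>m. P m 1 = m))
      \<longleftrightarrow>
      (\<exists>\<gamma>. bialg_map sV \<Delta>V \<epsilon>V sU (cop \<Delta>U) \<epsilon>U \<gamma> \<and>
         (\<forall>y m. \<gamma> y * m =
            (\<Sum>(m1,m2,m3)\<leftarrow>comult2 \<Delta>U m. \<Sum>(y1,y2,y3)\<leftarrow>comult2 \<Delta>V y.
               sU (\<sigma> m1 y3 * \<rho> m3 y1) (m2 * \<gamma> y2)))))
     \<and>
     ((\<exists>Q. D_bialg_map sU \<Delta>U \<epsilon>U sV \<Delta>V \<epsilon>V \<rho> \<sigma> sV \<Delta>V \<epsilon>V Q \<and> (\<forall>x. Q 1 x = x))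
      \<longleftrightarrow>
      (\<exists>\<mu>. bialg_map sU (cop \<Delta>U) \<epsilon>U sV \<Delta>V \<epsilon>V \<mu> \<and>
         (\<forall>y m. y * \<mu> m =
            (\<Sum>(m1,m2,m3)\<leftarrow>comult2 \<Delta>U m. \<Sum>(y1,y2,y3)\<leftarrow>comult2 \<Delta>V y.
               sV (\<sigma> m1 y3 * \<rho> m3 y1) (\<mu> m2 * y2)))))"
proof -
  interpret invertible_pairing sU \<Delta>U \<epsilon>U sV \<Delta>V \<epsilon>V \<rho> \<sigma>
    using U V pair inv by (simp add: invertible_pairing_def invertible_pairing_axioms_def bialg_def)
  show ?thesis
    using ex_retraction_U_iff ex_retraction_V_iff unfolding D_compatible_def by simp
qed

end
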